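(* Let $S,U$ be standard Borel, $\gamma\in(0,1)$, and consider two series-wired modules: module 1 with input state space $S$, output $U$, and module 2 with input $U$, output $S$, each with fixed policy, expected scalar one-step reward $r_i(x,a)$ and transition kernel $P^{(i)}(\cdot\mid x,a)$, inducing micro-step Bellman transformers $T_1:\mathcal{B}(U)\to\mathcal{B}(S)$, $T_2:\mathcal{B}(S)\to\mathcal{B}(U)$, $(T_iW)(x)=\int_A[r_i(x,a)+\gamma\int W\,dP^{(i)}(\cdot\mid x,a)]\pi_i(da\mid x)$; let $\widetilde T_i$ be defined likewise from perturbed $\tilde r_i,\widetilde P^{(i)}$ with the same policies. Assume all (original and perturbed) scalar rewards are bounded by $R_{\max}$, set $V_{\max}=R_{\max}/(1-\gamma)$, and assume $\sup_{x,a}|\tilde r_i(x,a)-r_i(x,a)|\le\varepsilon_r^{(i)}$ and $\sup_{x,a}d_{\mathrm{TV}}(\widetilde P^{(i)}(\cdot\mid x,a),P^{(i)}(\cdot\mid x,a))\le\varepsilon_P^{(i)}$. Let $\epsilon_i:=\varepsilon_r^{(i)}+\gamma V_{\max}\varepsilon_P^{(i)}$, and let $V^\pi,\widetilde V^\pi$ be the unique fixed points in $\mathcal{B}(S)$ of $T_1\circ T_2$ and $\widetilde T_1\circ\widetilde T_2$. Then \[\|\widetilde V^\pi-V^\pi\|_\infty\le\frac{\epsilon_1+\gamma\epsilon_2}{1-\gamma^2}.\]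
   Context: $\mathcal{B}(X)$ denotes bounded measurable real functions on $X$ with sup norm. $d_{\mathrm{TV}}(\mu,\nu):=\sup_{\|f\|_\infty\le1}|\int f\,d\mu-\int f\,d\nu|$. *)

theory Defs
  imports "HOL-Probability.Probability"
begin

definition bdd_meas :: "'a measure \<Rightarrow> ('a \<Rightarrow> real) set" where
  "bdd_meas M = {f. f \<in> borel_measurable M \<and> bounded (f ` space M)}"

definition sup_norm :: "'a measure \<Rightarrow> ('a \<Rightarrow> real) \<Rightarrow> real" where
  "sup_norm M f = (SUP x\<in>space M. \<bar>f x\<bar>)"

definition dTV :: "'a measure \<Rightarrow> 'a measure \<Rightarrow> real" where
  "dTV \<mu> \<nu> = (SUP f \<in> {f. f \<in> borel_measurable \<mu> \<and> (\<forall>x\<in>space \<mu>. \<bar>f x\<bar> \<le> 1)}.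
      \<bar>(\<integral>y. f y \<partial>\<mu>) - (\<integral>y. f y \<partial>\<nu>)\<bar>)"

definition bellman :: "real \<Rightarrow> ('x \<Rightarrow> 'a measure) \<Rightarrow> ('x \<Rightarrow> 'a \<Rightarrow> real)
    \<Rightarrow> ('x \<Rightarrow> 'a \<Rightarrow> 'y measure) \<Rightarrow> ('y \<Rightarrow> real) \<Rightarrow> 'x \<Rightarrow> real" where
  "bellman \<gamma> \<pi> r P W x = (\<integral>a. (r x a + \<gamma> * (\<integral>y. W y \<partial>(P x a))) \<partial>(\<pi> x))"

end

(*
  Write T = T1 o T2 and T~ = T1~ o T2~; both are gamma^2-contractions in sup norm, since each
  micro-step is a gamma-contraction. Two micro-steps give |V~| <= Rmax (1 + gamma) + gamma^2 ||V~||,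
  so the perturbed fixed point is bounded by Vmax = Rmax / (1 - gamma), and so is T2~ V~.
  On functions bounded by Vmax a perturbed micro-step moves the value by at most
  eps_r + gamma Vmax eps_P: the reward by eps_r, and the expectation of a Vmax-bounded function
  by Vmax times the total variation distance. Hence ||T~ V~ - T V~|| <= eps_1 + gamma eps_2, and
  ||V~ - V|| <= ||T~ V~ - T V~|| + ||T V~ - T V|| <= eps_1 + gamma eps_2 + gamma^2 ||V~ - V||.
*)

theory Submission
  imports Defs
begin

lemma integral_measurable_subprob_algebra2:
  fixes f :: "'a \<Rightarrow> 'b \<Rightarrow> 'c::{banach, second_countable_topology}"
  assumes f[measurable]: "(\<lambda>(x, y). f x y) \<in> borel_measurable (M \<Otimes>\<^sub>M N)"
    and L[measurable]: "L \<in> M \<rightarrow>\<^sub>M subprob_algebra N"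
  shows "(\<lambda>x. integral\<^sup>L (L x) (f x)) \<in> borel_measurable M"
proof -
  note integral_measurable_subprob_algebra[measurable] measurable_distr2[measurable]
  have "(\<lambda>x. integral\<^sup>L (distr (L x) (M \<Otimes>\<^sub>M N) (\<lambda>y. (x, y))) (\<lambda>(x, y). f x y)) \<in> borel_measurable M"
    by measurable
  then show ?thesis
    by (rule measurable_cong[THEN iffD1, rotated]) (simp add: integral_distr)
qed

lemma (in prob_space) abs_integral_le_const:
  fixes f :: "'a \<Rightarrow> real"
  assumes "f \<in> borel_measurable M" and "\<And>x. x \<in> space M \<Longrightarrow> \<bar>f x\<bar> \<le> c"
  shows "\<bar>\<integral>x. f x \<partial>M\<bar> \<le> c"
proof -
  have "integrable M f"
    using assms by (intro integrable_const_bound[where B = c] AE_I2) auto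
  have "\<bar>\<integral>x. f x \<partial>M\<bar> \<le> (\<integral>x. \<bar>f x\<bar> \<partial>M)"
    using integral_norm_bound[of M f] by simp
  also have "\<dots> \<le> (\<integral>x. c \<partial>M)"
    using \<open>integrable M f\<close> assms(2) by (intro integral_mono) auto
  finally show ?thesis
    by (simp add: prob_space)
qed

lemma (in prob_space) abs_integral_diff_le:
  fixes f g :: "'a \<Rightarrow> real"
  assumes "integrable M f" "integrable M g" and "\<And>x. x \<in> space M \<Longrightarrow> \<bar>f x - g x\<bar> \<le> c"
  shows "\<bar>(\<integral>x. f x \<partial>M) - (\<integral>x. g x \<partial>M)\<bar> \<le> c"
  using abs_integral_le_const[of "\<lambda>x. f x - g x" c] assms by simp

lemma bdd_measI:
  fixes f :: "'a \<Rightarrow> real"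
  assumes "f \<in> borel_measurable M" and "\<And>x. x \<in> space M \<Longrightarrow> \<bar>f x\<bar> \<le> B"
  shows "f \<in> bdd_meas M"
  using assms by (auto simp: bdd_meas_def bounded_iff)

lemma bdd_measE:
  fixes f :: "'a \<Rightarrow> real"
  assumes "f \<in> bdd_meas M"
  obtains B where "f \<in> borel_measurable M" and "\<And>x. x \<in> space M \<Longrightarrow> \<bar>f x\<bar> \<le> B"
  using assms that by (auto simp: bdd_meas_def bounded_iff)

lemma bdd_meas_diff:
  assumes "f \<in> bdd_meas M" and "g \<in> bdd_meas M"
  shows "(\<lambda>x. f x - g x) \<in> bdd_meas M"
proof -
  obtain Bf where f: "f \<in> borel_measurable M" and Bf: "\<And>x. x \<in> space M \<Longrightarrow> \<bar>f x\<bar> \<le> Bf"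
    using assms(1) by (metis bdd_measE)
  obtain Bg where g: "g \<in> borel_measurable M" and Bg: "\<And>x. x \<in> space M \<Longrightarrow> \<bar>g x\<bar> \<le> Bg"
    using assms(2) by (metis bdd_measE)
  have "\<bar>f x - g x\<bar> \<le> Bf + Bg" if "x \<in> space M" for x
    using abs_triangle_ineq4[of "f x" "g x"] Bf[OF that] Bg[OF that] by linarith
  with f g show ?thesis
    by (intro bdd_measI) auto
qed

lemma (in finite_measure) integrable_bdd_meas:
  assumes sets_eq: "sets M = sets N" and "f \<in> bdd_meas N"
  shows "integrable M f"
proof -
  obtain B where "f \<in> borel_measurable N" and B: "\<And>x. x \<in> space N \<Longrightarrow> \<bar>f x\<bar> \<le> B"
    using assms(2) by (metis bdd_measE)
  then have "f \<in> borel_measurable M"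
    using sets_eq by (simp cong: measurable_cong_sets)
  moreover have "AE x in M. norm (f x) \<le> B"
    using B sets_eq_imp_space_eq[OF sets_eq] by (intro AE_I2) simp
  ultimately show ?thesis
    by (intro integrable_const_bound)
qed

lemma abs_le_sup_norm:
  assumes "bounded (f ` space M)" and "x \<in> space M"
  shows "\<bar>f x\<bar> \<le> sup_norm M f"
proof -
  obtain B where "\<And>x. x \<in> space M \<Longrightarrow> \<bar>f x\<bar> \<le> B"
    using assms(1) by (auto simp: bounded_iff)
  then have "bdd_above ((\<lambda>x. \<bar>f x\<bar>) ` space M)"
    by (rule bdd_aboveI2)
  then show ?thesis
    unfolding sup_norm_def using assms(2) by (rule cSUP_upper[rotated])
qed

lemma sup_norm_le_of_self_bound:
  assumes "space M \<noteq> {}" and "k < 1"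
    and "\<And>x. x \<in> space M \<Longrightarrow> \<bar>f x\<bar> \<le> c + k * sup_norm M f"
  shows "sup_norm M f \<le> c / (1 - k)"
proof -
  have "sup_norm M f \<le> c + k * sup_norm M f"
    using assms(1,3) unfolding sup_norm_def by (rule cSUP_least)
  then show ?thesis
    using assms(2) by (simp add: field_simps)
qed

section \<open>Total variation\<close>

lemma abs_integral_diff_le_dTV_unit:
  fixes f :: "'a \<Rightarrow> real"
  assumes "prob_space \<mu>" "prob_space \<nu>" and sets_eq: "sets \<mu> = sets \<nu>"
    and "f \<in> borel_measurable \<mu>" and "\<And>y. y \<in> space \<mu> \<Longrightarrow> \<bar>f y\<bar> \<le> 1"
  shows "\<bar>(\<integral>y. f y \<partial>\<mu>) - (\<integral>y. f y \<partial>\<nu>)\<bar> \<le> dTV \<mu> \<nu>"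
proof -
  interpret \<mu>: prob_space \<mu> by fact
  interpret \<nu>: prob_space \<nu> by fact
  let ?F = "{g :: 'a \<Rightarrow> real. g \<in> borel_measurable \<mu> \<and> (\<forall>y\<in>space \<mu>. \<bar>g y\<bar> \<le> 1)}"
  let ?gap = "\<lambda>g. \<bar>(\<integral>y. g y \<partial>\<mu>) - (\<integral>y. g y \<partial>\<nu>)\<bar>"
  have "?gap g \<le> 2" if "g \<in> ?F" for g
  proof -
    have "\<bar>\<integral>y. g y \<partial>\<mu>\<bar> \<le> 1"
      using that by (intro \<mu>.abs_integral_le_const) auto
    moreover have "\<bar>\<integral>y. g y \<partial>\<nu>\<bar> \<le> 1"
      using that sets_eq sets_eq_imp_space_eq[OF sets_eq]
      by (intro \<nu>.abs_integral_le_const) (auto cong: measurable_cong_sets)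
    ultimately show ?thesis by linarith
  qed
  then have "bdd_above (?gap ` ?F)"
    by (intro bdd_aboveI[where M = 2]) auto
  moreover have "f \<in> ?F"
    using assms(4,5) by simp
  ultimately show ?thesis
    unfolding dTV_def by (rule cSUP_upper[rotated])
qed

lemma abs_integral_diff_le_dTV:
  fixes f :: "'a \<Rightarrow> real"
  assumes \<mu>: "prob_space \<mu>" and \<nu>: "prob_space \<nu>" and sets_eq: "sets \<mu> = sets \<nu>"
    and f: "f \<in> borel_measurable \<mu>" and f_le: "\<And>y. y \<in> space \<mu> \<Longrightarrow> \<bar>f y\<bar> \<le> B"
  shows "\<bar>(\<integral>y. f y \<partial>\<mu>) - (\<integral>y. f y \<partial>\<nu>)\<bar> \<le> B * dTV \<mu> \<nu>"
proof -
  obtain y0 where "y0 \<in> space \<mu>"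
    using prob_space.not_empty[OF \<mu>] by blast
  then have "B \<ge> 0"
    using f_le abs_ge_zero order_trans by blast
  show ?thesis
  proof (cases "B = 0")
    case True
    then have "f y = 0" if "y \<in> space \<mu>" for y
      using f_le[OF that] by simp
    then have "AE y in \<mu>. f y = 0" "AE y in \<nu>. f y = 0"
      using sets_eq_imp_space_eq[OF sets_eq] by (auto intro: AE_I2)
    then show ?thesis
      using True by (simp add: integral_eq_zero_AE)
  next
    case False
    with \<open>B \<ge> 0\<close> have "B > 0" by simp
    then have "\<bar>(\<integral>y. f y / B \<partial>\<mu>) - (\<integral>y. f y / B \<partial>\<nu>)\<bar> \<le> dTV \<mu> \<nu>"
      using f f_le by (intro abs_integral_diff_le_dTV_unit[OF \<mu> \<nu> sets_eq])
        (auto simp: abs_divide pos_divide_le_eq)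
    then have "\<bar>(\<integral>y. f y \<partial>\<mu>) - (\<integral>y. f y \<partial>\<nu>)\<bar> / B \<le> dTV \<mu> \<nu>"
      using \<open>B > 0\<close> by (simp add: abs_divide flip: diff_divide_distrib)
    then show ?thesis
      using \<open>B > 0\<close> by (simp add: pos_divide_le_eq mult.commute[of B])
  qed
qed

section \<open>Micro-step Bellman operators\<close>

definition action_value :: "real \<Rightarrow> ('x \<Rightarrow> 'a \<Rightarrow> real) \<Rightarrow> ('x \<Rightarrow> 'a \<Rightarrow> 'y measure)
    \<Rightarrow> ('y \<Rightarrow> real) \<Rightarrow> 'x \<Rightarrow> 'a \<Rightarrow> real" where
  "action_value \<gamma> r P W x a = r x a + \<gamma> * (\<integral>y. W y \<partial>P x a)"

lemma bellman_eq_integral_action_value: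
  "bellman \<gamma> \<pi> r P W x = (\<integral>a. action_value \<gamma> r P W x a \<partial>\<pi> x)"
  by (simp add: bellman_def action_value_def)

locale policy_module =
  fixes X :: "'x measure" and A :: "'a measure" and Y :: "'y measure"
    and \<pi> :: "'x \<Rightarrow> 'a measure" and r :: "'x \<Rightarrow> 'a \<Rightarrow> real" and P :: "'x \<Rightarrow> 'a \<Rightarrow> 'y measure"
    and R :: real
  assumes policy_measurable: "\<pi> \<in> X \<rightarrow>\<^sub>M prob_algebra A"
    and reward_measurable: "(\<lambda>(x, a). r x a) \<in> borel_measurable (X \<Otimes>\<^sub>M A)"
    and transition_measurable: "(\<lambda>(x, a). P x a) \<in> X \<Otimes>\<^sub>M A \<rightarrow>\<^sub>M prob_algebra Y"
    and reward_bounded: "\<And>x a. x \<in> space X \<Longrightarrow> a \<in> space A \<Longrightarrow> \<bar>r x a\<bar> \<le> R"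
begin

lemma policy_prob_space: "x \<in> space X \<Longrightarrow> prob_space (\<pi> x)"
  and sets_policy: "x \<in> space X \<Longrightarrow> sets (\<pi> x) = sets A"
  using measurable_space[OF policy_measurable] by (auto simp: space_prob_algebra)

lemma transition_prob_space: "x \<in> space X \<Longrightarrow> a \<in> space A \<Longrightarrow> prob_space (P x a)"
  and sets_transition: "x \<in> space X \<Longrightarrow> a \<in> space A \<Longrightarrow> sets (P x a) = sets Y"
  using measurable_space[OF transition_measurable, of "(x, a)"]
  by (auto simp: space_prob_algebra space_pair_measure)

lemma action_value_measurable:
  assumes "W \<in> borel_measurable Y"
  shows "(\<lambda>(x, a). action_value \<gamma> r P W x a) \<in> borel_measurable (X \<Otimes>\<^sub>M A)"
proof -
  have "(\<lambda>z. \<integral>y. W y \<partial>(case z of (x, a) \<Rightarrow> P x a)) \<in> borel_measurable (X \<Otimes>\<^sub>M A)"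
    using measurable_prob_algebraD[OF transition_measurable] integral_measurable_subprob_algebra[OF assms]
    by (rule measurable_compose)
  then show ?thesis
    using reward_measurable unfolding action_value_def case_prod_beta' by measurable
qed

lemma action_value_section_measurable:
  "W \<in> borel_measurable Y \<Longrightarrow> x \<in> space X \<Longrightarrow> action_value \<gamma> r P W x \<in> borel_measurable A"
  using measurable_compose[OF measurable_Pair1' action_value_measurable] by simp

lemma abs_action_value_le:
  assumes W: "W \<in> borel_measurable Y" and W_le: "\<And>y. y \<in> space Y \<Longrightarrow> \<bar>W y\<bar> \<le> B"
    and "0 \<le> \<gamma>" and x: "x \<in> space X" and a: "a \<in> space A"
  shows "\<bar>action_value \<gamma> r P W x a\<bar> \<le> R + \<gamma> * B"
proof -
  interpret prob_space "P x a"
    using x a by (rule transition_prob_space)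
  have "\<bar>\<integral>y. W y \<partial>P x a\<bar> \<le> B"
    using W W_le sets_transition[OF x a] sets_eq_imp_space_eq[OF sets_transition[OF x a]]
    by (intro abs_integral_le_const) (auto cong: measurable_cong_sets)
  then have "\<gamma> * \<bar>\<integral>y. W y \<partial>P x a\<bar> \<le> \<gamma> * B"
    using \<open>0 \<le> \<gamma>\<close> by (rule mult_left_mono)
  with reward_bounded[OF x a] show ?thesis
    unfolding action_value_def using \<open>0 \<le> \<gamma>\<close>
    by (metis abs_mult abs_of_nonneg abs_triangle_ineq add_mono order_trans)
qed

lemma integrable_action_value:
  assumes "W \<in> borel_measurable Y" "\<And>y. y \<in> space Y \<Longrightarrow> \<bar>W y\<bar> \<le> B" "0 \<le> \<gamma>" and x: "x \<in> space X"
  shows "integrable (\<pi> x) (action_value \<gamma> r P W x)"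
proof -
  interpret prob_space "\<pi> x"
    using x by (rule policy_prob_space)
  show ?thesis
    using assms by (intro integrable_bdd_meas[OF sets_policy[OF x]] bdd_measI[where B = "R + \<gamma> * B"]
        action_value_section_measurable abs_action_value_le)
qed

lemma bellman_measurable:
  assumes "W \<in> borel_measurable Y"
  shows "bellman \<gamma> \<pi> r P W \<in> borel_measurable X"
proof -
  have "(\<lambda>x. \<integral>a. action_value \<gamma> r P W x a \<partial>\<pi> x) \<in> borel_measurable X"
    using action_value_measurable[OF assms] measurable_prob_algebraD[OF policy_measurable]
    by (rule integral_measurable_subprob_algebra2)
  then show ?thesis
    by (simp add: bellman_eq_integral_action_value[abs_def])
qed

lemma abs_bellman_le:
  assumes "W \<in> borel_measurable Y" "\<And>y. y \<in> space Y \<Longrightarrow> \<bar>W y\<bar> \<le> B" "0 \<le> \<gamma>" and x: "x \<in> space X"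
  shows "\<bar>bellman \<gamma> \<pi> r P W x\<bar> \<le> R + \<gamma> * B"
proof -
  interpret prob_space "\<pi> x"
    using x by (rule policy_prob_space)
  show ?thesis
    unfolding bellman_eq_integral_action_value
    using assms sets_policy[OF x] sets_eq_imp_space_eq[OF sets_policy[OF x]]
    by (intro abs_integral_le_const abs_action_value_le)
       (auto intro: action_value_section_measurable cong: measurable_cong_sets)
qed

lemma bellman_bdd_meas:
  assumes "W \<in> bdd_meas Y" "0 \<le> \<gamma>"
  shows "bellman \<gamma> \<pi> r P W \<in> bdd_meas X"
proof -
  obtain B where "W \<in> borel_measurable Y" "\<And>y. y \<in> space Y \<Longrightarrow> \<bar>W y\<bar> \<le> B"
    using assms(1) by (metis bdd_measE)
  with assms(2) show ?thesis
    by (intro bdd_measI[where B = "R + \<gamma> * B"] bellman_measurable abs_bellman_le)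
qed

lemma abs_bellman_diff_le:
  assumes W1: "W1 \<in> bdd_meas Y" and W2: "W2 \<in> bdd_meas Y"
    and D: "\<And>y. y \<in> space Y \<Longrightarrow> \<bar>W1 y - W2 y\<bar> \<le> D"
    and "0 \<le> \<gamma>" and x: "x \<in> space X"
  shows "\<bar>bellman \<gamma> \<pi> r P W1 x - bellman \<gamma> \<pi> r P W2 x\<bar> \<le> \<gamma> * D"
proof -
  obtain B1 B2 where
    "W1 \<in> borel_measurable Y" "\<And>y. y \<in> space Y \<Longrightarrow> \<bar>W1 y\<bar> \<le> B1"
    "W2 \<in> borel_measurable Y" "\<And>y. y \<in> space Y \<Longrightarrow> \<bar>W2 y\<bar> \<le> B2"
    using W1 W2 by (metis bdd_measE)
  then have integrable:
    "integrable (\<pi> x) (action_value \<gamma> r P W1 x)" "integrable (\<pi> x) (action_value \<gamma> r P W2 x)"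
    using \<open>0 \<le> \<gamma>\<close> x by (blast intro: integrable_action_value)+
  have "\<bar>action_value \<gamma> r P W1 x a - action_value \<gamma> r P W2 x a\<bar> \<le> \<gamma> * D"
    if a: "a \<in> space A" for a
  proof -
    interpret prob_space "P x a"
      using x a by (rule transition_prob_space)
    have "\<bar>(\<integral>y. W1 y \<partial>P x a) - (\<integral>y. W2 y \<partial>P x a)\<bar> \<le> D"
      using W1 W2 D sets_transition[OF x a] sets_eq_imp_space_eq[OF sets_transition[OF x a]]
      by (intro abs_integral_diff_le integrable_bdd_meas) auto
    then show ?thesis
      unfolding action_value_def using \<open>0 \<le> \<gamma>\<close>
      by (simp add: abs_mult mult_left_mono flip: right_diff_distrib)
  qed
  then show ?thesis
    unfolding bellman_eq_integral_action_value
    using x sets_eq_imp_space_eq[OF sets_policy[OF x]]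
    by (intro prob_space.abs_integral_diff_le[OF policy_prob_space] integrable) auto
qed

end

locale perturbed_policy_module =
  policy_module X A Y \<pi> r P R + perturbed: policy_module X A Y \<pi> r' P' R
  for X A Y \<pi> r P R r' P' +
  fixes \<epsilon>r \<epsilon>P :: real
  assumes reward_perturbation: "\<And>x a. x \<in> space X \<Longrightarrow> a \<in> space A \<Longrightarrow> \<bar>r' x a - r x a\<bar> \<le> \<epsilon>r"
    and transition_perturbation: "\<And>x a. x \<in> space X \<Longrightarrow> a \<in> space A \<Longrightarrow> dTV (P' x a) (P x a) \<le> \<epsilon>P"
begin

lemma abs_bellman_perturbation_le:
  assumes W: "W \<in> borel_measurable Y" and W_le: "\<And>y. y \<in> space Y \<Longrightarrow> \<bar>W y\<bar> \<le> B"
    and "0 \<le> B" "0 \<le> \<gamma>" and x: "x \<in> space X"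
  shows "\<bar>bellman \<gamma> \<pi> r' P' W x - bellman \<gamma> \<pi> r P W x\<bar> \<le> \<epsilon>r + \<gamma> * B * \<epsilon>P"
proof -
  have "\<bar>action_value \<gamma> r' P' W x a - action_value \<gamma> r P W x a\<bar> \<le> \<epsilon>r + \<gamma> * B * \<epsilon>P"
    if a: "a \<in> space A" for a
  proof -
    have "\<bar>(\<integral>y. W y \<partial>P' x a) - (\<integral>y. W y \<partial>P x a)\<bar> \<le> B * dTV (P' x a) (P x a)"
      using W W_le x a sets_transition perturbed.sets_transition
        sets_eq_imp_space_eq[OF perturbed.sets_transition[OF x a]]
      by (intro abs_integral_diff_le_dTV perturbed.transition_prob_space transition_prob_space)
         (auto cong: measurable_cong_sets)
    also have "\<dots> \<le> B * \<epsilon>P"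
      using transition_perturbation[OF x a] \<open>0 \<le> B\<close> by (rule mult_left_mono)
    finally have "\<bar>\<gamma> * ((\<integral>y. W y \<partial>P' x a) - (\<integral>y. W y \<partial>P x a))\<bar> \<le> \<gamma> * B * \<epsilon>P"
      using \<open>0 \<le> \<gamma>\<close> by (simp add: abs_mult mult.assoc mult_left_mono)
    with reward_perturbation[OF x a] show ?thesis
      unfolding action_value_def by (simp add: algebra_simps)
  qed
  then show ?thesis
    unfolding bellman_eq_integral_action_value
    using W W_le \<open>0 \<le> \<gamma>\<close> x sets_eq_imp_space_eq[OF sets_policy[OF x]]
    by (intro prob_space.abs_integral_diff_le[OF policy_prob_space]
        integrable_action_value perturbed.integrable_action_value) auto
qed

end

section \<open>Modules wired in series\<close>

locale series_modules =
  first: policy_module X A1 Y \<pi>1 r1 P1 R + second: policy_module Y A2 X \<pi>2 r2 P2 R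
  for X A1 Y \<pi>1 r1 P1 R A2 \<pi>2 r2 P2
begin

lemma abs_composite_bellman_diff_le:
  assumes "V1 \<in> bdd_meas X" "V2 \<in> bdd_meas X" "\<And>x. x \<in> space X \<Longrightarrow> \<bar>V1 x - V2 x\<bar> \<le> D"
    and "0 \<le> \<gamma>" "x \<in> space X"
  shows "\<bar>bellman \<gamma> \<pi>1 r1 P1 (bellman \<gamma> \<pi>2 r2 P2 V1) x - bellman \<gamma> \<pi>1 r1 P1 (bellman \<gamma> \<pi>2 r2 P2 V2) x\<bar>
    \<le> \<gamma>\<^sup>2 * D"
  using assms unfolding power2_eq_square mult.assoc
  by (intro first.abs_bellman_diff_le second.bellman_bdd_meas second.abs_bellman_diff_le)

lemma abs_fixed_point_le:
  assumes "0 \<le> \<gamma>" "\<gamma> < 1" and V: "V \<in> bdd_meas X"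
    and V_fixed: "V = bellman \<gamma> \<pi>1 r1 P1 (bellman \<gamma> \<pi>2 r2 P2 V)" and x: "x \<in> space X"
  shows "\<bar>V x\<bar> \<le> R / (1 - \<gamma>)"
proof -
  have V_meas: "V \<in> borel_measurable X" and V_bounded: "bounded (V ` space X)"
    using V by (auto simp: bdd_meas_def)
  have "\<bar>V z\<bar> \<le> R * (1 + \<gamma>) + \<gamma>\<^sup>2 * sup_norm X V" if z: "z \<in> space X" for z
  proof -
    have "\<bar>bellman \<gamma> \<pi>1 r1 P1 (bellman \<gamma> \<pi>2 r2 P2 V) z\<bar> \<le> R + \<gamma> * (R + \<gamma> * sup_norm X V)"
      using V_meas abs_le_sup_norm[OF V_bounded] \<open>0 \<le> \<gamma>\<close> z
      by (intro first.abs_bellman_le second.bellman_measurable second.abs_bellman_le)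
    then show ?thesis
      using V_fixed by (simp add: algebra_simps power2_eq_square)
  qed
  then have "sup_norm X V \<le> R * (1 + \<gamma>) / (1 - \<gamma>\<^sup>2)"
    using x assms(1,2) by (intro sup_norm_le_of_self_bound) (auto simp: power_less_one_iff)
  also have "\<dots> = R * (1 + \<gamma>) / ((1 - \<gamma>) * (1 + \<gamma>))"
    by (simp add: power2_eq_square algebra_simps)
  also have "\<dots> = R / (1 - \<gamma>)"
    using \<open>0 \<le> \<gamma>\<close> by simp
  finally show ?thesis
    using abs_le_sup_norm[OF V_bounded x] by linarith
qed

end

locale perturbed_series =
  first: perturbed_policy_module X A1 Y \<pi>1 r1 P1 R r1' P1' \<epsilon>r1 \<epsilon>P1 +
  second: perturbed_policy_module Y A2 X \<pi>2 r2 P2 R r2' P2' \<epsilon>r2 \<epsilon>P2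
  for X A1 Y \<pi>1 r1 P1 R r1' P1' \<epsilon>r1 \<epsilon>P1 A2 \<pi>2 r2 P2 r2' P2' \<epsilon>r2 \<epsilon>P2

sublocale perturbed_series \<subseteq> nominal: series_modules X A1 Y \<pi>1 r1 P1 R A2 \<pi>2 r2 P2
  by unfold_locales

sublocale perturbed_series \<subseteq> perturbed: series_modules X A1 Y \<pi>1 r1' P1' R A2 \<pi>2 r2' P2'
  by unfold_locales

context perturbed_series
begin

lemma abs_composite_bellman_perturbation_le:
  assumes W: "W \<in> borel_measurable X" and W_le: "\<And>x. x \<in> space X \<Longrightarrow> \<bar>W x\<bar> \<le> B"
    and "0 \<le> B" "R + \<gamma> * B \<le> B" "0 \<le> \<gamma>" and x: "x \<in> space X"
  shows "\<bar>bellman \<gamma> \<pi>1 r1' P1' (bellman \<gamma> \<pi>2 r2' P2' W) x - bellman \<gamma> \<pi>1 r1 P1 (bellman \<gamma> \<pi>2 r2 P2 W) x\<bar>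
    \<le> (\<epsilon>r1 + \<gamma> * B * \<epsilon>P1) + \<gamma> * (\<epsilon>r2 + \<gamma> * B * \<epsilon>P2)"
proof -
  define W' where "W' = bellman \<gamma> \<pi>2 r2' P2' W"
  have W'_meas: "W' \<in> borel_measurable Y"
    unfolding W'_def using W by (rule second.perturbed.bellman_measurable)
  have W'_le: "\<And>y. y \<in> space Y \<Longrightarrow> \<bar>W' y\<bar> \<le> B"
    unfolding W'_def using second.perturbed.abs_bellman_le[OF W W_le \<open>0 \<le> \<gamma>\<close>] \<open>R + \<gamma> * B \<le> B\<close>
    by fastforce
  have "\<bar>bellman \<gamma> \<pi>1 r1' P1' W' x - bellman \<gamma> \<pi>1 r1 P1 W' x\<bar> \<le> \<epsilon>r1 + \<gamma> * B * \<epsilon>P1"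
    using W'_meas W'_le \<open>0 \<le> B\<close> \<open>0 \<le> \<gamma>\<close> x by (rule first.abs_bellman_perturbation_le)
  moreover have "\<bar>bellman \<gamma> \<pi>1 r1 P1 W' x - bellman \<gamma> \<pi>1 r1 P1 (bellman \<gamma> \<pi>2 r2 P2 W) x\<bar>
      \<le> \<gamma> * (\<epsilon>r2 + \<gamma> * B * \<epsilon>P2)"
  proof (rule first.abs_bellman_diff_le)
    show "W' \<in> bdd_meas Y"
      using W'_meas W'_le by (rule bdd_measI)
    show "bellman \<gamma> \<pi>2 r2 P2 W \<in> bdd_meas Y"
      using bdd_measI[OF W W_le] \<open>0 \<le> \<gamma>\<close> by (rule second.bellman_bdd_meas)
    show "\<bar>W' y - bellman \<gamma> \<pi>2 r2 P2 W y\<bar> \<le> \<epsilon>r2 + \<gamma> * B * \<epsilon>P2" if "y \<in> space Y" for y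
      unfolding W'_def using W W_le \<open>0 \<le> B\<close> \<open>0 \<le> \<gamma>\<close> that by (rule second.abs_bellman_perturbation_le)
  qed (use \<open>0 \<le> \<gamma>\<close> x in auto)
  ultimately show ?thesis
    unfolding W'_def by linarith
qed

theorem fixed_point_perturbation:
  assumes gamma: "0 \<le> \<gamma>" "\<gamma> < 1" and X_nonempty: "space X \<noteq> {}"
    and V: "V \<in> bdd_meas X" "V = bellman \<gamma> \<pi>1 r1 P1 (bellman \<gamma> \<pi>2 r2 P2 V)"
    and V': "V' \<in> bdd_meas X" "V' = bellman \<gamma> \<pi>1 r1' P1' (bellman \<gamma> \<pi>2 r2' P2' V')"
  shows "sup_norm X (\<lambda>x. V' x - V x)
    \<le> ((\<epsilon>r1 + \<gamma> * (R / (1 - \<gamma>)) * \<epsilon>P1) + \<gamma> * (\<epsilon>r2 + \<gamma> * (R / (1 - \<gamma>)) * \<epsilon>P2)) / (1 - \<gamma>\<^sup>2)"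
proof (rule sup_norm_le_of_self_bound)
  define Vmax where "Vmax = R / (1 - \<gamma>)"
  have V'_meas: "V' \<in> borel_measurable X"
    using V'(1) by (simp add: bdd_meas_def)
  have V'_le: "\<And>x. x \<in> space X \<Longrightarrow> \<bar>V' x\<bar> \<le> Vmax"
    unfolding Vmax_def using gamma V' by (rule perturbed.abs_fixed_point_le)
  then have "0 \<le> Vmax"
    using X_nonempty by (meson abs_ge_zero ex_in_conv order_trans)
  have "R + \<gamma> * Vmax \<le> Vmax"
    using gamma unfolding Vmax_def by (simp add: field_simps)
  have diff_bounded: "bounded ((\<lambda>x. V' x - V x) ` space X)"
    using bdd_meas_diff[OF V'(1) V(1)] by (simp add: bdd_meas_def)
  fix x assume x: "x \<in> space X"
  have "\<bar>bellman \<gamma> \<pi>1 r1' P1' (bellman \<gamma> \<pi>2 r2' P2' V') x - bellman \<gamma> \<pi>1 r1 P1 (bellman \<gamma> \<pi>2 r2 P2 V') x\<bar>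
      \<le> (\<epsilon>r1 + \<gamma> * Vmax * \<epsilon>P1) + \<gamma> * (\<epsilon>r2 + \<gamma> * Vmax * \<epsilon>P2)"
    using V'_meas V'_le \<open>0 \<le> Vmax\<close> \<open>R + \<gamma> * Vmax \<le> Vmax\<close> gamma(1) x
    by (rule abs_composite_bellman_perturbation_le)
  moreover have "\<bar>bellman \<gamma> \<pi>1 r1 P1 (bellman \<gamma> \<pi>2 r2 P2 V') x - bellman \<gamma> \<pi>1 r1 P1 (bellman \<gamma> \<pi>2 r2 P2 V) x\<bar>
      \<le> \<gamma>\<^sup>2 * sup_norm X (\<lambda>x. V' x - V x)"
    using V'(1) V(1) abs_le_sup_norm[OF diff_bounded] gamma(1) x
    by (rule nominal.abs_composite_bellman_diff_le)
  moreover note fun_cong[OF V'(2), of x] fun_cong[OF V(2), of x]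
  ultimately show "\<bar>V' x - V x\<bar> \<le> ((\<epsilon>r1 + \<gamma> * (R / (1 - \<gamma>)) * \<epsilon>P1) + \<gamma> * (\<epsilon>r2 + \<gamma> * (R / (1 - \<gamma>)) * \<epsilon>P2))
      + \<gamma>\<^sup>2 * sup_norm X (\<lambda>x. V' x - V x)"
    unfolding Vmax_def by linarith
qed (use X_nonempty gamma in \<open>auto simp: power_less_one_iff\<close>)

end

theorem lemma16:
  fixes \<gamma> Rmax er1 er2 eP1 eP2 :: real
    and A1 :: "'a measure" and A2 :: "'b measure"
    and \<pi>1 :: "'s::polish_space \<Rightarrow> 'a measure"
    and \<pi>2 :: "'u::polish_space \<Rightarrow> 'b measure"
    and r1 r1' :: "'s \<Rightarrow> 'a \<Rightarrow> real"
    and r2 r2' :: "'u \<Rightarrow> 'b \<Rightarrow> real"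
    and P1 P1' :: "'s \<Rightarrow> 'a \<Rightarrow> 'u measure"
    and P2 P2' :: "'u \<Rightarrow> 'b \<Rightarrow> 's measure"
    and V V' :: "'s \<Rightarrow> real"
  assumes gamma: "0 < \<gamma>" "\<gamma> < 1"
    and pol1: "\<pi>1 \<in> borel \<rightarrow>\<^sub>M prob_algebra A1"
    and pol2: "\<pi>2 \<in> borel \<rightarrow>\<^sub>M prob_algebra A2"
    and r1_meas: "(\<lambda>(x,a). r1 x a) \<in> borel_measurable (borel \<Otimes>\<^sub>M A1)"
    and r1'_meas: "(\<lambda>(x,a). r1' x a) \<in> borel_measurable (borel \<Otimes>\<^sub>M A1)"
    and r2_meas: "(\<lambda>(x,a). r2 x a) \<in> borel_measurable (borel \<Otimes>\<^sub>M A2)"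
    and r2'_meas: "(\<lambda>(x,a). r2' x a) \<in> borel_measurable (borel \<Otimes>\<^sub>M A2)"
    and P1_meas: "(\<lambda>(x,a). P1 x a) \<in> borel \<Otimes>\<^sub>M A1 \<rightarrow>\<^sub>M prob_algebra borel"
    and P1'_meas: "(\<lambda>(x,a). P1' x a) \<in> borel \<Otimes>\<^sub>M A1 \<rightarrow>\<^sub>M prob_algebra borel"
    and P2_meas: "(\<lambda>(x,a). P2 x a) \<in> borel \<Otimes>\<^sub>M A2 \<rightarrow>\<^sub>M prob_algebra borel"
    and P2'_meas: "(\<lambda>(x,a). P2' x a) \<in> borel \<Otimes>\<^sub>M A2 \<rightarrow>\<^sub>M prob_algebra borel"
    and r1_bdd: "\<And>x a. a \<in> space A1 \<Longrightarrow> \<bar>r1 x a\<bar> \<le> Rmax"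
    and r1'_bdd: "\<And>x a. a \<in> space A1 \<Longrightarrow> \<bar>r1' x a\<bar> \<le> Rmax"
    and r2_bdd: "\<And>x a. a \<in> space A2 \<Longrightarrow> \<bar>r2 x a\<bar> \<le> Rmax"
    and r2'_bdd: "\<And>x a. a \<in> space A2 \<Longrightarrow> \<bar>r2' x a\<bar> \<le> Rmax"
    and r1_pert: "\<And>x a. a \<in> space A1 \<Longrightarrow> \<bar>r1' x a - r1 x a\<bar> \<le> er1"
    and r2_pert: "\<And>x a. a \<in> space A2 \<Longrightarrow> \<bar>r2' x a - r2 x a\<bar> \<le> er2"
    and P1_pert: "\<And>x a. a \<in> space A1 \<Longrightarrow> dTV (P1' x a) (P1 x a) \<le> eP1"
    and P2_pert: "\<And>x a. a \<in> space A2 \<Longrightarrow> dTV (P2' x a) (P2 x a) \<le> eP2"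
    and V_bdd: "V \<in> bdd_meas (borel :: 's measure)"
    and V_fix: "V = bellman \<gamma> \<pi>1 r1 P1 (bellman \<gamma> \<pi>2 r2 P2 V)"
    and V'_bdd: "V' \<in> bdd_meas (borel :: 's measure)"
    and V'_fix: "V' = bellman \<gamma> \<pi>1 r1' P1' (bellman \<gamma> \<pi>2 r2' P2' V')"
  shows "sup_norm (borel :: 's measure) (\<lambda>x. V' x - V x)
           \<le> ((er1 + \<gamma> * (Rmax / (1 - \<gamma>)) * eP1)
               + \<gamma> * (er2 + \<gamma> * (Rmax / (1 - \<gamma>)) * eP2)) / (1 - \<gamma>\<^sup>2)"
proof -
  interpret perturbed_series "borel :: 's measure" A1 "borel :: 'u measure" \<pi>1 r1 P1 Rmax r1' P1' er1 eP1
      A2 \<pi>2 r2 P2 r2' P2' er2 eP2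
    by unfold_locales (simp_all add: assms)
  show ?thesis
    using gamma V_bdd V_fix V'_bdd V'_fix by (intro fixed_point_perturbation) auto
qed

end
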